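(* Let $k > d \geq 1$ and $1 < q \leq k$ be integers. There is a function $f = f_{k,d,q} : \mathbb{N} \to \mathbb{R}$ with $f(N) \to 0$ as $N \to \infty$ such that for every positive integer $n$ with $q \mid n-2$, setting $N = (k-1)n - k + 2$, there exists an $N$-vertex $k$-graph $H$ with $\delta_d(H) \geq (1/q - f(N)) \binom{N-d}{k-d}$ that does not contain the $k$-expansion of any $n$-vertex tree all of whose vertex degrees are congruent to $1$ modulo $q$.
   Context: A $k$-graph is a $k$-uniform hypergraph. For a $k$-graph $H$ and $S \subseteq V(H)$, $\deg_H(S)$ is the number of edges containing $S$, and $\delta_d(H)$ is the minimum of $\deg_H(S)$ over all $d$-subsets $S \subseteq V(H)$. The $k$-expansion $T^{(k)}$ of a graph $T$ is the $k$-graph obtained by replacing each edge $uv$ of $T$ by a $k$-edge consisting of $u$, $v$ and $k-2$ new vertices that belong to no other edge. "Contain" means as a (not necessarily induced) subgraph. *)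

theory Defs
  imports Complex_Main
begin

definition is_kgraph :: "nat \<Rightarrow> 'a set \<Rightarrow> 'a set set \<Rightarrow> bool" where
  "is_kgraph k V E \<longleftrightarrow> finite V \<and> (\<forall>e\<in>E. e \<subseteq> V \<and> card e = k)"

definition hdeg :: "'a set set \<Rightarrow> 'a set \<Rightarrow> nat" where
  "hdeg E S = card {e\<in>E. S \<subseteq> e}"

definition min_codegree :: "nat \<Rightarrow> 'a set \<Rightarrow> 'a set set \<Rightarrow> nat" where
  "min_codegree d V E = Min {hdeg E S | S. S \<subseteq> V \<and> card S = d}"

definition hcontains :: "'b set \<Rightarrow> 'b set set \<Rightarrow> 'a set \<Rightarrow> 'a set set \<Rightarrow> bool" where
  "hcontains VG EG VH EH \<longleftrightarrow>
     (\<exists>\<phi>. inj_on \<phi> VG \<and> \<phi> ` VG \<subseteq> VH \<and> (\<forall>e\<in>EG. \<phi> ` e \<in> EH))"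

definition is_graph :: "'a set \<Rightarrow> 'a set set \<Rightarrow> bool" where
  "is_graph V E \<longleftrightarrow> finite V \<and> (\<forall>e\<in>E. e \<subseteq> V \<and> card e = 2)"

definition adj :: "'a set set \<Rightarrow> 'a \<Rightarrow> 'a \<Rightarrow> bool" where
  "adj E u v \<longleftrightarrow> u \<noteq> v \<and> {u, v} \<in> E"

definition connected_graph :: "'a set \<Rightarrow> 'a set set \<Rightarrow> bool" where
  "connected_graph V E \<longleftrightarrow> (\<forall>u\<in>V. \<forall>v\<in>V. (u, v) \<in> {(x, y). adj E x y}\<^sup>*)"

definition is_cycle :: "'a set set \<Rightarrow> 'a list \<Rightarrow> bool" where
  "is_cycle E cs \<longleftrightarrow> length cs \<ge> 3 \<and> distinct cs \<and>
     (\<forall>i < length cs - 1. adj E (cs ! i) (cs ! Suc i)) \<and> adj E (last cs) (hd cs)"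

definition acyclic_graph :: "'a set set \<Rightarrow> bool" where
  "acyclic_graph E \<longleftrightarrow> \<not> (\<exists>cs. is_cycle E cs)"

definition is_tree :: "'a set \<Rightarrow> 'a set set \<Rightarrow> bool" where
  "is_tree V E \<longleftrightarrow> is_graph V E \<and> V \<noteq> {} \<and> connected_graph V E \<and> acyclic_graph E"

definition gdeg :: "'a set set \<Rightarrow> 'a \<Rightarrow> nat" where
  "gdeg E v = card {e\<in>E. v \<in> e}"

definition expansion_V :: "nat \<Rightarrow> 'a set \<Rightarrow> 'a set set \<Rightarrow> ('a + 'a set \<times> nat) set" where
  "expansion_V k V E = Inl ` V \<union> {Inr (e, i) | e i. e \<in> E \<and> i < k - 2}"

definition expansion_E :: "nat \<Rightarrow> 'a set set \<Rightarrow> ('a + 'a set \<times> nat) set set" where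
  "expansion_E k E = {Inl ` e \<union> {Inr (e, i) | i. i < k - 2} | e. e \<in> E}"

end

(* Number the vertices 0, ..., N - 1, label each vertex x > 0 by its residue x mod q, and give
   vertex 0 a label that makes the total label sum 1 mod q. The host k-graph consists of the
   k-sets whose label sum is 0 mod q. A d-set S lies in roughly a 1/q fraction of the k-sets
   through it: each choice of all but one of the further vertices is completed by the about N/q
   vertices of the one residue that makes the sum vanish. On the other hand, the k-expansion of an
   n-vertex tree has n + (n - 1)(k - 2) = N vertices, so a copy of it would be spanning. When all
   tree degrees are 1 mod q, every vertex of the expansion has degree 1 mod q, so adding up the
   label sums of the edges of the copy yields the total label sum mod q, which would then be 0. *)

theory Submission
  imports Defs
begin

lemma finite_set_of_subsets: "finite V \<Longrightarrow> \<forall>e\<in>E. e \<subseteq> V \<Longrightarrow> finite E"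
  by (rule finite_subset[of E "Pow V"]) auto

lemma connected_graph_has_descending_parent:
  assumes "connected_graph V E" and "r \<in> V"
  obtains p and h :: "'a \<Rightarrow> nat" where "\<And>v. v \<in> V \<Longrightarrow> v \<noteq> r \<Longrightarrow> adj E (p v) v \<and> h (p v) < h v"
proof -
  define R where "R = {(x, y). adj E x y}"
  define h where "h v = (LEAST m. (r, v) \<in> R ^^ m)" for v
  have "\<exists>u. adj E u v \<and> h u < h v" if "v \<in> V" "v \<noteq> r" for v
  proof -
    have "(r, v) \<in> R\<^sup>*"
      using assms that unfolding connected_graph_def R_def by blast
    then obtain m where "(r, v) \<in> R ^^ m"
      by (meson rtrancl_power)
    then have path: "(r, v) \<in> R ^^ h v"
      unfolding h_def by (rule LeastI)
    with \<open>v \<noteq> r\<close> obtain m' where m': "h v = Suc m'"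
      by (cases "h v") auto
    with path obtain u where "(r, u) \<in> R ^^ m'" and "(u, v) \<in> R"
      by (metis relpow_Suc_E)
    moreover from this have "h u \<le> m'"
      unfolding h_def by (intro Least_le)
    ultimately show ?thesis
      using m' unfolding R_def by auto
  qed
  then have "\<forall>v. \<exists>u. v \<in> V \<and> v \<noteq> r \<longrightarrow> adj E u v \<and> h u < h v"
    by blast
  then obtain p where "\<forall>v. v \<in> V \<and> v \<noteq> r \<longrightarrow> adj E (p v) v \<and> h (p v) < h v"
    by metis
  then show thesis
    using that by blast
qed

lemma card_le_Suc_card_edges_if_connected:
  assumes "is_graph V E" and "V \<noteq> {}" and "connected_graph V E"
  shows "card V \<le> Suc (card E)"
proof -
  obtain r where r: "r \<in> V"
    using assms(2) by blast
  obtain p and h :: "'a \<Rightarrow> nat" where p: "\<And>v. v \<in> V \<Longrightarrow> v \<noteq> r \<Longrightarrow> adj E (p v) v \<and> h (p v) < h v"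
    using connected_graph_has_descending_parent[OF assms(3) r] by blast
  have "inj_on (\<lambda>v. {p v, v}) (V - {r})"
  proof (rule inj_onI)
    fix v w assume "v \<in> V - {r}" "w \<in> V - {r}" "{p v, v} = {p w, w}"
    with p[of v] p[of w] show "v = w"
      by (auto simp: doubleton_eq_iff)
  qed
  moreover have "(\<lambda>v. {p v, v}) ` (V - {r}) \<subseteq> E"
    using p unfolding adj_def by auto
  moreover have "finite E"
    using assms(1) finite_set_of_subsets unfolding is_graph_def by blast
  ultimately have "card (V - {r}) \<le> card E"
    by (rule card_inj_on_le)
  then show ?thesis
    using r by simp
qed

lemma inj_on_expansion_edge: "inj_on (\<lambda>e. Inl ` e \<union> {Inr (e, i) | i. i < k - 2}) E"
proof (rule inj_onI)
  fix e e' :: "'a set"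
  assume "Inl ` e \<union> {Inr (e, i) | i. i < k - 2} = Inl ` e' \<union> {Inr (e', i) | i. i < k - 2}"
  then have "Inl -` (Inl ` e \<union> {Inr (e, i) | i. i < k - 2}) = Inl -` (Inl ` e' \<union> {Inr (e', i) | i. i < k - 2})"
    by simp
  then show "e = e'"
    by auto
qed

lemma expansion_V_eq: "expansion_V k V E = Inl ` V \<union> Inr ` (E \<times> {..<k - 2})"
  unfolding expansion_V_def by auto

lemma finite_expansion_V: "finite V \<Longrightarrow> finite E \<Longrightarrow> finite (expansion_V k V E)"
  unfolding expansion_V_eq by simp

lemma card_expansion_V:
  assumes "finite V" and "finite E"
  shows "card (expansion_V k V E) = card V + card E * (k - 2)"
proof -
  let ?old = "Inl ` V :: ('a + 'a set \<times> nat) set"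
  let ?new = "Inr ` (E \<times> {..<k - 2}) :: ('a + 'a set \<times> nat) set"
  have "card (?old \<union> ?new) = card ?old + card ?new"
    by (rule card_Un_disjoint) (use assms in auto)
  then show ?thesis
    unfolding expansion_V_eq by (simp add: card_image card_cartesian_product)
qed

lemma card_expansion_V_of_tree_ge:
  assumes "is_tree V E" and "2 \<le> k"
  shows "(k - 1) * card V + 2 - k \<le> card (expansion_V k V E)"
proof -
  have G: "is_graph V E" and "V \<noteq> {}" and "connected_graph V E"
    using assms(1) unfolding is_tree_def by auto
  then have "card V \<le> Suc (card E)"
    by (rule card_le_Suc_card_edges_if_connected)
  moreover have "finite V" "finite E"
    using G finite_set_of_subsets unfolding is_graph_def by auto
  moreover obtain n where "card V = Suc n"
    using \<open>V \<noteq> {}\<close> \<open>finite V\<close> by (metis card_0_eq not0_implies_Suc)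
  moreover obtain j where "k = j + 2"
    using assms(2) by (metis add.commute le_Suc_ex)
  ultimately show ?thesis
    using card_expansion_V[of V E k] by (simp add: algebra_simps)
qed

lemma expansion_edge_subset_expansion_V:
  assumes "\<forall>e\<in>E. e \<subseteq> V" and "ee \<in> expansion_E k E"
  shows "ee \<subseteq> expansion_V k V E"
  using assms unfolding expansion_E_def expansion_V_def by blast

lemma gdeg_expansion_Inl: "gdeg (expansion_E k E) (Inl v) = gdeg E v"
proof -
  have "{ee \<in> expansion_E k E. Inl v \<in> ee} = (\<lambda>e. Inl ` e \<union> {Inr (e, i) | i. i < k - 2}) ` {e\<in>E. v \<in> e}"
    unfolding expansion_E_def by blast
  then show ?thesis
    unfolding gdeg_def by (simp add: card_image inj_on_expansion_edge)
qed

lemma gdeg_expansion_Inr: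
  assumes "e \<in> E" and "i < k - 2"
  shows "gdeg (expansion_E k E) (Inr (e, i)) = 1"
proof -
  have "{ee \<in> expansion_E k E. Inr (e, i) \<in> ee} = {Inl ` e \<union> {Inr (e, i) | i. i < k - 2}}"
    using assms unfolding expansion_E_def by blast
  then show ?thesis
    unfolding gdeg_def by simp
qed

lemma gdeg_expansion_mod_eq_1:
  assumes "\<forall>v\<in>V. gdeg E v mod q = 1 mod q" and "y \<in> expansion_V k V E"
  shows "gdeg (expansion_E k E) y mod q = 1 mod q"
  using assms unfolding expansion_V_def by (auto simp: gdeg_expansion_Inl gdeg_expansion_Inr)

lemma sum_edges_eq_sum_gdeg:
  fixes g :: "'a \<Rightarrow> 'b::comm_semiring_1"
  assumes "finite X" and "\<forall>e\<in>EE. e \<subseteq> X"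
  shows "(\<Sum>e\<in>EE. \<Sum>y\<in>e. g y) = (\<Sum>y\<in>X. of_nat (gdeg EE y) * g y)"
proof -
  have "finite EE"
    using assms by (rule finite_set_of_subsets)
  have "(\<Sum>e\<in>EE. \<Sum>y\<in>e. g y) = (\<Sum>e\<in>EE. \<Sum>y\<in>{y\<in>X. y \<in> e}. g y)"
    using assms(2) by (intro sum.cong refl arg_cong[where f = "sum g"]) blast
  also have "\<dots> = (\<Sum>y\<in>X. \<Sum>e\<in>{e\<in>EE. y \<in> e}. g y)"
    by (rule sum.swap_restrict[OF \<open>finite EE\<close> assms(1)])
  also have "\<dots> = (\<Sum>y\<in>X. of_nat (gdeg EE y) * g y)"
    by (simp add: gdeg_def)
  finally show ?thesis .
qed

lemma sum_mod_eq_0_if_gdeg_mod_eq_1: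
  fixes g :: "'a \<Rightarrow> nat"
  assumes "finite X" and "\<forall>e\<in>EE. e \<subseteq> X"
    and "\<forall>y\<in>X. gdeg EE y mod q = 1 mod q"
    and "\<forall>e\<in>EE. (\<Sum>y\<in>e. g y) mod q = 0"
  shows "(\<Sum>y\<in>X. g y) mod q = 0"
proof -
  have "(\<Sum>y\<in>X. g y mod q) = (\<Sum>y\<in>X. gdeg EE y * g y mod q)"
    using assms(3) by (intro sum.cong refl) (metis mod_mult_left_eq mult_1)
  then have "(\<Sum>y\<in>X. g y) mod q = (\<Sum>y\<in>X. gdeg EE y * g y) mod q"
    by (metis (no_types) mod_sum_eq)
  also have "\<dots> = (\<Sum>e\<in>EE. \<Sum>y\<in>e. g y) mod q"
    using sum_edges_eq_sum_gdeg[OF assms(1,2), of g] by simp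
  also have "\<dots> = 0"
    using assms(4) mod_sum_eq[of "\<lambda>e. \<Sum>y\<in>e. g y" q EE] by simp
  finally show ?thesis .
qed

text \<open>A pair \<open>(R, v)\<close> is recovered from the edge \<open>insert v (S \<union> R)\<close> together with \<open>v\<close>,
  which ranges over the \<open>Suc r\<close> vertices of that edge outside \<open>S\<close>.\<close>
lemma card_extension_pairs_le:
  assumes E: "is_kgraph (card S + Suc r) V E"
  shows "card {(R, v). R \<subseteq> V - S \<and> v \<in> V - (S \<union> R) \<and> insert v (S \<union> R) \<in> E} \<le> Suc r * hdeg E S"
proof -
  define F where "F = {e\<in>E. S \<subseteq> e}"
  have "finite V" and edges: "\<forall>e\<in>E. e \<subseteq> V \<and> card e = card S + Suc r"
    using E unfolding is_kgraph_def by blast+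
  then have "finite F"
    using finite_set_of_subsets[of V F] unfolding F_def by auto
  have fin: "finite (SIGMA e:F. e - S)"
    using \<open>finite F\<close> \<open>finite V\<close> edges unfolding F_def by (intro finite_SigmaI) (auto intro: finite_subset)
  have pairs: "{(R, v). R \<subseteq> V - S \<and> v \<in> V - (S \<union> R) \<and> insert v (S \<union> R) \<in> E}
      \<subseteq> (\<lambda>(e, v). (e - S - {v}, v)) ` (SIGMA e:F. e - S)"
  proof
    fix p assume "p \<in> {(R, v). R \<subseteq> V - S \<and> v \<in> V - (S \<union> R) \<and> insert v (S \<union> R) \<in> E}"
    then obtain R v where p: "p = (R, v)"
      and "R \<subseteq> V - S" "v \<in> V - (S \<union> R)" "insert v (S \<union> R) \<in> E"
      by blast
    then have "(insert v (S \<union> R), v) \<in> (SIGMA e:F. e - S)" and "insert v (S \<union> R) - S - {v} = R"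
      unfolding F_def by auto
    then show "p \<in> (\<lambda>(e, v). (e - S - {v}, v)) ` (SIGMA e:F. e - S)"
      unfolding p by (intro image_eqI[where x = "(insert v (S \<union> R), v)"]) simp_all
  qed
  have "card {(R, v). R \<subseteq> V - S \<and> v \<in> V - (S \<union> R) \<and> insert v (S \<union> R) \<in> E}
      \<le> card (SIGMA e:F. e - S)"
    using card_mono[OF finite_imageI[OF fin] pairs] card_image_le[OF fin, of "\<lambda>(e, v). (e - S - {v}, v)"]
    by linarith
  also have "\<dots> = Suc r * card F"
  proof -
    have "card (e - S) = Suc r" if "e \<in> F" for e
    proof -
      have "S \<subseteq> e" "card e = card S + Suc r"
        using that edges unfolding F_def by auto
      then have "finite S"
        using card_ge_0_finite finite_subset by fastforce
      then show ?thesis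
        using \<open>S \<subseteq> e\<close> \<open>card e = card S + Suc r\<close> by (simp add: card_Diff_subset)
    qed
    then show ?thesis
      using \<open>finite F\<close> \<open>finite V\<close> edges unfolding F_def
      by (subst card_SigmaI) (auto intro: finite_subset)
  qed
  finally show ?thesis
    unfolding hdeg_def F_def .
qed

lemma hdeg_ge_by_extensions:
  assumes E: "is_kgraph (card S + Suc r) V E"
    and ext: "\<And>R. R \<subseteq> V - S \<Longrightarrow> card R = r \<Longrightarrow> L \<le> card {v \<in> V - (S \<union> R). insert v (S \<union> R) \<in> E}"
  shows "(card (V - S) choose r) * L \<le> Suc r * hdeg E S"
proof -
  define Rs where "Rs = {R. R \<subseteq> V - S \<and> card R = r}"
  have "finite V"
    using E unfolding is_kgraph_def by blast
  have "(card (V - S) choose r) * L = card Rs * L"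
    unfolding Rs_def using n_subsets[of "V - S" r] \<open>finite V\<close> by simp
  also have "\<dots> \<le> card (SIGMA R:Rs. {v \<in> V - (S \<union> R). insert v (S \<union> R) \<in> E})"
    using sum_bounded_below[of Rs L] ext \<open>finite V\<close> by (simp add: Rs_def card_SigmaI)
  also have "\<dots> \<le> card {(R, v). R \<subseteq> V - S \<and> v \<in> V - (S \<union> R) \<and> insert v (S \<union> R) \<in> E}"
  proof (rule card_mono)
    show "finite {(R, v). R \<subseteq> V - S \<and> v \<in> V - (S \<union> R) \<and> insert v (S \<union> R) \<in> E}"
      by (rule finite_subset[of _ "Pow V \<times> V"]) (use \<open>finite V\<close> in auto)
  qed (auto simp: Rs_def)
  also have "\<dots> \<le> Suc r * hdeg E S"
    by (rule card_extension_pairs_le[OF E])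
  finally show ?thesis .
qed

lemma binomial_Suc_mult_le:
  fixes M N r L D :: nat
  assumes "(M choose r) * L \<le> Suc r * D" and "M \<le> N"
  shows "(M choose Suc r) * L \<le> N * D"
proof -
  have "Suc r * (M choose Suc r) = (M - r) * (M choose r)"
    by (simp only: binomial_absorption binomial_absorb_comp)
  then have "Suc r * ((M choose Suc r) * L) = (M - r) * ((M choose r) * L)"
    by (metis mult.assoc)
  also have "\<dots> \<le> N * (Suc r * D)"
    by (rule mult_le_mono) (use assms in simp_all)
  also have "\<dots> = Suc r * (N * D)"
    by (rule mult.left_commute)
  finally show ?thesis
    by (simp only: Suc_mult_le_cancel1)
qed

lemma min_codegree_attained:
  assumes "finite V" and "d \<le> card V"
  obtains S where "S \<subseteq> V" and "card S = d" and "min_codegree d V E = hdeg E S"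
proof -
  obtain S0 where "S0 \<subseteq> V" "card S0 = d"
    using assms obtain_subset_with_card_n by blast
  then have "{hdeg E S | S. S \<subseteq> V \<and> card S = d} \<noteq> {}"
    by blast
  moreover have "finite {hdeg E S | S. S \<subseteq> V \<and> card S = d}"
    by (rule finite_subset[of _ "hdeg E ` Pow V"]) (use assms(1) in auto)
  ultimately have "min_codegree d V E \<in> {hdeg E S | S. S \<subseteq> V \<and> card S = d}"
    unfolding min_codegree_def by (rule Min_in[rotated])
  then show thesis
    using that by blast
qed

definition zero_sum_kgraph :: "nat \<Rightarrow> nat \<Rightarrow> 'a set \<Rightarrow> ('a \<Rightarrow> nat) \<Rightarrow> 'a set set" where
  "zero_sum_kgraph q k V lab = {e. e \<subseteq> V \<and> card e = k \<and> (\<Sum>x\<in>e. lab x) mod q = 0}"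

lemma is_kgraph_zero_sum_kgraph: "finite V \<Longrightarrow> is_kgraph k V (zero_sum_kgraph q k V lab)"
  unfolding is_kgraph_def zero_sum_kgraph_def by blast

text \<open>A copy of \<open>(X, EE)\<close> is spanning, so summing the label sums of its edges counts every
  host vertex \<open>1 mod q\<close> times.\<close>
lemma not_hcontains_zero_sum_kgraph:
  fixes X :: "'b set" and V :: "'a set"
  assumes "finite V" and "finite X" and "card V \<le> card X"
    and "\<forall>e\<in>EE. e \<subseteq> X" and "\<forall>y\<in>X. gdeg EE y mod q = 1 mod q"
    and "(\<Sum>x\<in>V. lab x) mod q \<noteq> 0"
  shows "\<not> hcontains X EE V (zero_sum_kgraph q k V lab)"
proof
  assume "hcontains X EE V (zero_sum_kgraph q k V lab)"
  then obtain \<phi> where inj: "inj_on \<phi> X" and "\<phi> ` X \<subseteq> V"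
    and edges: "\<forall>e\<in>EE. \<phi> ` e \<in> zero_sum_kgraph q k V lab"
    unfolding hcontains_def by blast
  have "\<phi> ` X = V"
    using \<open>\<phi> ` X \<subseteq> V\<close> assms(1,3) card_image[OF inj] card_mono[OF assms(1) \<open>\<phi> ` X \<subseteq> V\<close>]
    by (intro card_subset_eq) simp_all
  have "\<forall>e\<in>EE. (\<Sum>y\<in>e. lab (\<phi> y)) mod q = 0"
  proof
    fix e assume "e \<in> EE"
    have "inj_on \<phi> e"
      using inj assms(4) \<open>e \<in> EE\<close> inj_on_subset by blast
    then have "(\<Sum>y\<in>e. lab (\<phi> y)) = (\<Sum>x\<in>\<phi> ` e. lab x)"
      by (simp add: sum.reindex)
    then show "(\<Sum>y\<in>e. lab (\<phi> y)) mod q = 0"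
      using edges \<open>e \<in> EE\<close> unfolding zero_sum_kgraph_def by simp
  qed
  then have "(\<Sum>y\<in>X. lab (\<phi> y)) mod q = 0"
    by (rule sum_mod_eq_0_if_gdeg_mod_eq_1[OF assms(2,4,5)])
  moreover have "(\<Sum>y\<in>X. lab (\<phi> y)) = (\<Sum>x\<in>V. lab x)"
    using sum.reindex[OF inj, of lab] \<open>\<phi> ` X = V\<close> by simp
  ultimately show False
    using assms(6) by simp
qed

lemma not_hcontains_tree_expansion:
  assumes "is_tree V E" and "\<forall>v\<in>V. gdeg E v mod q = 1 mod q" and "2 \<le> k"
    and "N \<le> (k - 1) * card V + 2 - k" and "(\<Sum>x<N. lab x) mod q \<noteq> 0"
  shows "\<not> hcontains (expansion_V k V E) (expansion_E k E) {..<N} (zero_sum_kgraph q k {..<N} lab)"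
proof (rule not_hcontains_zero_sum_kgraph)
  have "finite V" and subsets: "\<forall>e\<in>E. e \<subseteq> V" and "finite E"
    using assms(1) finite_set_of_subsets unfolding is_tree_def is_graph_def by auto
  then show "finite (expansion_V k V E)"
    by (simp add: finite_expansion_V)
  show "card {..<N} \<le> card (expansion_V k V E)"
    using card_expansion_V_of_tree_ge[OF assms(1,3)] assms(4) by simp
  show "\<forall>ee\<in>expansion_E k E. ee \<subseteq> expansion_V k V E"
    using subsets expansion_edge_subset_expansion_V by blast
  show "\<forall>y\<in>expansion_V k V E. gdeg (expansion_E k E) y mod q = 1 mod q"
    using assms(2) gdeg_expansion_mod_eq_1 by blast
qed (use assms(5) in simp_all)

lemma card_residue_class_ge:
  assumes "0 < q" and "j < q"
  shows "N div q \<le> card {x\<in>{..<N}. x mod q = j}"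
proof -
  have "(\<lambda>i. q * i + j) ` {..<N div q} \<subseteq> {x\<in>{..<N}. x mod q = j}"
  proof (intro image_subsetI CollectI conjI)
    fix i assume "i \<in> {..<N div q}"
    then have "q * Suc i \<le> q * (N div q)"
      by (intro mult_le_mono2) simp
    also have "\<dots> \<le> N"
      by simp
    finally show "q * i + j \<in> {..<N}"
      using \<open>j < q\<close> by simp
    show "(q * i + j) mod q = j"
      using assms by simp
  qed
  moreover have "inj_on (\<lambda>i. q * i + j) {..<N div q}"
    using assms by (auto simp: inj_on_def)
  ultimately show ?thesis
    using card_inj_on_le[of "\<lambda>i. q * i + j" "{..<N div q}"] by simp
qed

lemma card_zero_sum_extensions_ge:
  assumes "0 < q" and lab: "\<And>x. x \<noteq> 0 \<Longrightarrow> lab x = x mod q"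
    and "T \<subseteq> {..<N}" and "Suc (card T) = k"
  shows "N div q - k \<le> card {v \<in> {..<N} - T. insert v T \<in> zero_sum_kgraph q k {..<N} lab}"
proof -
  define j where "j = (q - (\<Sum>x\<in>T. lab x) mod q) mod q"
  have "finite T"
    using assms(3) finite_subset by blast
  have "(j + (\<Sum>x\<in>T. lab x)) mod q = (q - (\<Sum>x\<in>T. lab x) mod q + (\<Sum>x\<in>T. lab x) mod q) mod q"
    unfolding j_def by (simp add: mod_add_left_eq mod_add_right_eq)
  also have "\<dots> = 0"
    using \<open>0 < q\<close> by (simp add: less_imp_le)
  finally have "(j + (\<Sum>x\<in>T. lab x)) mod q = 0" .
  \<comment> \<open>Vertex 0 is excluded: its label is not its residue.\<close>
  have sub: "{x\<in>{..<N}. x mod q = j} - insert 0 T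
      \<subseteq> {v \<in> {..<N} - T. insert v T \<in> zero_sum_kgraph q k {..<N} lab}"
  proof
    fix v assume v: "v \<in> {x\<in>{..<N}. x mod q = j} - insert 0 T"
    then have "(\<Sum>x\<in>insert v T. lab x) = j + (\<Sum>x\<in>T. lab x)"
      using lab \<open>finite T\<close> by simp
    moreover have "card (insert v T) = k"
      using v \<open>finite T\<close> assms(4) by simp
    ultimately show "v \<in> {v \<in> {..<N} - T. insert v T \<in> zero_sum_kgraph q k {..<N} lab}"
      using v assms(3) \<open>(j + (\<Sum>x\<in>T. lab x)) mod q = 0\<close> unfolding zero_sum_kgraph_def by simp
  qed
  have "N div q - k \<le> card ({x\<in>{..<N}. x mod q = j} - insert 0 T)"
  proof -
    have "N div q \<le> card {x\<in>{..<N}. x mod q = j}"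
      using card_residue_class_ge[of q j N] \<open>0 < q\<close> unfolding j_def by simp
    moreover have "card (insert 0 T) \<le> k"
      using assms(4) \<open>finite T\<close> by (simp add: card_insert_if)
    ultimately show ?thesis
      using diff_card_le_card_Diff[of "insert 0 T" "{x\<in>{..<N}. x mod q = j}"] \<open>finite T\<close> by simp
  qed
  also have "\<dots> \<le> card {v \<in> {..<N} - T. insert v T \<in> zero_sum_kgraph q k {..<N} lab}"
    by (intro card_mono sub) simp
  finally show ?thesis .
qed

lemma hdeg_zero_sum_kgraph_ge:
  assumes "0 < q" and lab: "\<And>x. x \<noteq> 0 \<Longrightarrow> lab x = x mod q"
    and "d < k" and "S \<subseteq> {..<N}" and "card S = d"
  shows "((N - d) choose (k - d)) * (N div q - k) \<le> N * hdeg (zero_sum_kgraph q k {..<N} lab) S"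
proof -
  define r where "r = k - d - 1"
  have k: "k = card S + Suc r" and "k - d = Suc r"
    using assms(3,5) unfolding r_def by simp_all
  have "card ({..<N} - S) = N - d"
    using assms(4,5) by (simp add: card_Diff_subset finite_subset)
  moreover have "(card ({..<N} - S) choose r) * (N div q - k)
      \<le> Suc r * hdeg (zero_sum_kgraph q k {..<N} lab) S"
  proof (rule hdeg_ge_by_extensions)
    show "is_kgraph (card S + Suc r) {..<N} (zero_sum_kgraph q k {..<N} lab)"
      unfolding k[symmetric] by (simp add: is_kgraph_zero_sum_kgraph)
    fix R assume R: "R \<subseteq> {..<N} - S" "card R = r"
    then have "S \<union> R \<subseteq> {..<N}"
      using assms(4) by blast
    moreover have "Suc (card (S \<union> R)) = k"
    proof -
      have "finite S" "finite R"
        using assms(4) R(1) by (meson finite_lessThan finite_Diff finite_subset)+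
      moreover have "S \<inter> R = {}"
        using R(1) by blast
      ultimately show ?thesis
        using card_Un_disjoint[of S R] R(2) k by simp
    qed
    ultimately show "N div q - k \<le> card {v \<in> {..<N} - (S \<union> R). insert v (S \<union> R) \<in> zero_sum_kgraph q k {..<N} lab}"
      using card_zero_sum_extensions_ge[OF assms(1) lab] by blast
  qed
  ultimately show ?thesis
    unfolding \<open>k - d = Suc r\<close> by (intro binomial_Suc_mult_le) simp_all
qed

lemma min_codegree_zero_sum_kgraph_ge:
  assumes "0 < q" and "\<And>x. x \<noteq> 0 \<Longrightarrow> lab x = x mod q" and "d < k"
  shows "(1 / real q - real (k + 1) / real N) * real ((N - d) choose (k - d))
    \<le> real (min_codegree d {..<N} (zero_sum_kgraph q k {..<N} lab))"
proof (cases "(N - d) choose (k - d) = 0")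
  case False
  then have "d < N"
    using assms(3) binomial_eq_0[of "N - d" "k - d"] by (cases "d < N") auto
  then obtain S where S: "S \<subseteq> {..<N}" "card S = d"
    and min: "min_codegree d {..<N} (zero_sum_kgraph q k {..<N} lab) = hdeg (zero_sum_kgraph q k {..<N} lab) S"
    using min_codegree_attained[of "{..<N}" d] by auto
  have "1 / real q - real (k + 1) / real N \<le> real (N div q - k) / real N"
  proof -
    have "real (N mod q) / real q \<le> 1"
      using \<open>0 < q\<close> by (simp add: divide_le_eq_1 less_imp_le)
    then have "real N / real q - 1 \<le> real (N div q)"
      using of_nat_of_nat_div_aux[of N q, where 'a = real] by linarith
    moreover have "real (N div q) - real k \<le> real (N div q - k)"
      by (cases "k \<le> N div q") (simp_all add: of_nat_diff)
    moreover have "1 / real q - real (k + 1) / real N = (real N / real q - 1 - real k) / real N"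
      using \<open>d < N\<close> by (simp add: field_simps)
    ultimately show ?thesis
      by (simp add: divide_right_mono)
  qed
  then have "(1 / real q - real (k + 1) / real N) * real ((N - d) choose (k - d))
      \<le> real (N div q - k) / real N * real ((N - d) choose (k - d))"
    by (rule mult_right_mono) simp_all
  also have "\<dots> \<le> real (hdeg (zero_sum_kgraph q k {..<N} lab) S)"
  proof -
    have "real ((N - d) choose (k - d)) * real (N div q - k)
        \<le> real N * real (hdeg (zero_sum_kgraph q k {..<N} lab) S)"
      using hdeg_zero_sum_kgraph_ge[OF assms S] unfolding of_nat_mult[symmetric] of_nat_le_iff .
    then show ?thesis
      using \<open>d < N\<close> by (simp add: divide_le_eq mult.commute)
  qed
  finally show ?thesis
    unfolding min .
qed (simp add: binomial_eq_0)

text \<open>Vertex 0 carries a correction term that makes the total label sum \<open>1 + q * s\<close>,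
  where \<open>s\<close> is the sum of the other labels.\<close>
definition residue_labelling :: "nat \<Rightarrow> nat \<Rightarrow> nat \<Rightarrow> nat" where
  "residue_labelling q N x = (if x = 0 then 1 + (q - 1) * (\<Sum>y\<in>{1..<N}. y mod q) else x mod q)"

lemma residue_labelling_neq_0: "x \<noteq> 0 \<Longrightarrow> residue_labelling q N x = x mod q"
  unfolding residue_labelling_def by simp

lemma sum_residue_labelling_mod:
  assumes "1 < q" and "0 < N"
  shows "(\<Sum>x<N. residue_labelling q N x) mod q = 1"
proof -
  define s where "s = (\<Sum>y\<in>{1..<N}. y mod q)"
  have "{..<N} = insert 0 {1..<N}"
    using assms(2) by auto
  then have "(\<Sum>x<N. residue_labelling q N x) = 1 + (q - 1) * s + s"
    unfolding s_def residue_labelling_def by simp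
  also have "\<dots> = Suc (q * s)"
    using assms(1) by (simp add: algebra_simps)
  finally show ?thesis
    using assms(1) by (simp add: Suc_times_mod_eq)
qed

theorem theorem3p4:
  fixes k d q :: nat
  assumes "k > d" and "d \<ge> 1" and "1 < q" and "q \<le> k"
  shows "\<exists>f :: nat \<Rightarrow> real. (f \<longlongrightarrow> 0) sequentially \<and>
    (\<forall>n::nat. n > 0 \<longrightarrow> (int q dvd int n - 2) \<longrightarrow>
      (let N = (k - 1) * n + 2 - k in
       \<exists>E :: nat set set. is_kgraph k {..<N} E \<and>
         real (min_codegree d {..<N} E) \<ge> (1 / real q - f N) * real ((N - d) choose (k - d)) \<and>
         \<not> (\<exists>(VT :: nat set) ET. is_tree VT ET \<and> card VT = n \<and>
                (\<forall>v\<in>VT. gdeg ET v mod q = 1 mod q) \<and>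
                hcontains (expansion_V k VT ET) (expansion_E k ET) {..<N} E)))"
proof -
  define N where "N n = (k - 1) * n + 2 - k" for n
  define H where "H n = zero_sum_kgraph q k {..<N n} (residue_labelling q (N n))" for n
  have "0 < N n" if "0 < n" for n
  proof -
    have "k - 1 \<le> (k - 1) * n"
      using that by simp
    then show ?thesis
      using assms(1,2) unfolding N_def by linarith
  qed
  then have no_tree: "\<not> hcontains (expansion_V k VT ET) (expansion_E k ET) {..<N n} (H n)"
    if "is_tree VT ET" and "card VT = n" and "\<forall>v\<in>VT. gdeg ET v mod q = 1 mod q" and "0 < n"
    for n and VT :: "nat set" and ET
    using not_hcontains_tree_expansion[OF that(1,3)] sum_residue_labelling_mod[OF assms(3)] that assms(1,2)
    unfolding H_def N_def by simp
  have "(1 / real q - real (k + 1) / real (N n)) * real ((N n - d) choose (k - d))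
      \<le> real (min_codegree d {..<N n} (H n))" for n
    unfolding H_def
    using min_codegree_zero_sum_kgraph_ge[OF _ residue_labelling_neq_0 assms(1)] assms(3) by simp
  moreover have "is_kgraph k {..<N n} (H n)" for n
    unfolding H_def by (simp add: is_kgraph_zero_sum_kgraph)
  ultimately show ?thesis
    unfolding Let_def N_def[symmetric]
    by (intro exI[of _ "\<lambda>N. real (k + 1) / real N"] conjI lim_const_over_n allI impI) (use no_tree in blast)
qed

end
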